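(* In the setting below, the vector $\tau R=1\otimes e^{\lambda_1-\lambda_6}+1\otimes e^{-\lambda_3+\lambda_5}-1\otimes e^{-\lambda_1+\lambda_3-\lambda_5+\lambda_6}\in V^{\Lambda_6}$ is a highest weight vector of type $Vir(\tfrac45,\tfrac23)\otimes W^{\Omega_0}$, i.e. it satisfies (HW1)–(HW5) with $h=2/3$ and $\omega_j=0$.
   Context: Setting. $Q$ is the $E_6$ root lattice with simple roots $\alpha_1,\dots,\alpha_6$ (Dynkin chain $\alpha_1-\alpha_3-\alpha_4-\alpha_5-\alpha_6$, $\alpha_2$ attached to $\alpha_4$), form from the Cartan matrix, fundamental weights $\lambda_i$, $P=\bigoplus\mathbb Z\lambda_i$, $\mathfrak h=\mathbb C\otimes P$. $\varepsilon$ bimultiplicative on $P$ with $[\varepsilon(\lambda_i,\lambda_j)]$ rows $(1,1,1,1,1,1)$, $(-1,1,1,1,1,-1)$, $(-1,1,1,1,1,1)$, $(1,-1,1,1,1,1)$, $(1,1,1,1,1,-1)$, $(1,1,1,1,1,1)$. $V_P=S(\hat{\mathfrak h}^-)\otimes\mathbb C[P]$ with Heisenberg operators $h(n)$ ($[h(m),h'(n)]=m\langle h,h'\rangle\delta_{m+n,0}$, $h(n)1=0$ for $n>0$, $h(0)(u\otimes e^\beta)=\langle h,\beta\rangle u\otimes e^\beta$). For $\alpha\in Q$, acting on $V_P$: $Y(1\otimes e^\alpha,z)=\exp(\sum_{k\ge1}\frac{\alpha(-k)}kz^k)\exp(-\sum_{k\ge1}\frac{\alpha(k)}kz^{-k})e_\alpha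 z^{\alpha(0)}=\sum_n\{1\otimes e^\alpha\}_nz^{-n-1}$, $e_\alpha(u\otimes e^\beta)=\varepsilon(\alpha,\beta)u\otimes e^{\alpha+\beta}$, $z^{\alpha(0)}(u\otimes e^\beta)=z^{\langle\alpha,\beta\rangle}u\otimes e^\beta$; $Y(h_1(-1)\cdots h_k(-1)\otimes e^\alpha,z)=\,:h_1(z)\cdots h_k(z)Y(1\otimes e^\alpha,z):$, $h(z)=\sum_nh(n)z^{-n-1}$. $V^{\Lambda_6}$ is spanned by $S(\hat{\mathfrak h}^-)\otimes e^\nu$, $\nu\in\lambda_6+Q$. $\tau$: $\alpha_1\leftrightarrow\alpha_6$, $\alpha_3\leftrightarrow\alpha_5$; $\mathrm{Proj}(\nu)=(\nu+\tau\nu)/2$. $\theta=\alpha_1+2\alpha_2+2\alpha_3+3\alpha_4+2\alpha_5+\alpha_6$. Raising operators of $\tilde{\mathfrak a}$ ($F_4^{(1)}$): $\{\beta_1\}_0=\{1\otimes e^{\alpha_2}\}_0$, $\{\beta_2\}_0=\{1\otimes e^{\alpha_4}\}_0$, $\{\beta_3\}_0=\{1\otimes e^{\alpha_3}\}_0+\{1\otimes e^{\alpha_5}\}_0$, $\{\beta_4\}_0=\{1\otimes e^{\alpha_1}\}_0+\{1\otimes e^{\alpha_6}\}_0$, $\{1\otimes e^{-\theta}\}_1$. Coset conformal vector $\omega=\frac1{10}[(-\lambda_1+\lambda_6)(-1)^2+(\lambda_3-\lambda_5)(-1)^2+(\lambda_1-\lambda_3+\lambda_5-\lambda_6)(-1)^2]\otimes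 e^0+\frac15(-1\otimes e^{\pm\gamma_1}-1\otimes e^{\pm\gamma_2}+1\otimes e^{\pm\gamma_3})$, $\gamma_1=\alpha_1-\alpha_6$, $\gamma_2=\alpha_3-\alpha_5$, $\gamma_3=\gamma_1+\gamma_2$, $1\otimes e^{\pm\gamma}:=1\otimes e^\gamma+1\otimes e^{-\gamma}$; $L(n)=\{\omega\}_{n+1}$ (Virasoro, $c=4/5$, commuting with $\tilde{\mathfrak a}$). $W^{\Omega_0}$ is the basic level one irreducible $F_4^{(1)}$-module. A nonzero $v$ is a highest weight vector of type $Vir(\frac45,h)\otimes W^{\Omega_j}$ if (HW1) $\{1\otimes e^{-\theta}\}_1v=0$; (HW2) $\{\beta_i\}_0v=0$, $i=1,\dots,4$; (HW3) $L(1)v=L(2)v=0$; (HW4) $L(0)v=hv$; (HW5) $v\in\bigoplus_kS(\hat{\mathfrak h}^-)\otimes e^{\nu_k}$ with $\mathrm{Proj}(\nu_k)=\omega_j$ ($\omega_0=0$). *)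

theory Defs
  imports Complex_Main "HOL-Library.Multiset" "HOL-Library.Function_Algebras"
begin

text \<open>Indices 1..6 of simple roots / fundamental weights (Bourbaki labelling:
 chain a1-a3-a4-a5-a6, a2 attached to a4).\<close>
datatype ix = I1 | I2 | I3 | I4 | I5 | I6

lemma UNIV_ix: "(UNIV :: ix set) = {I1, I2, I3, I4, I5, I6}"
  using ix.exhaust by auto

instance ix :: finite
  by standard (simp add: UNIV_ix)

fun ixn :: "ix \<Rightarrow> nat" where
  "ixn I1 = 0" | "ixn I2 = 1" | "ixn I3 = 2" | "ixn I4 = 3" | "ixn I5 = 4" | "ixn I6 = 5"

text \<open>Elements of P are written in the basis of fundamental weights:
  \<open>\<nu> :: wt\<close> stands for \<open>\<Sum>i. \<nu> i \<lambda>_i\<close>.\<close>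
type_synonym wt = "ix \<Rightarrow> int"

definition lam :: "ix \<Rightarrow> wt" where
  "lam i = (\<lambda>j. if j = i then 1 else 0)"

definition cartan :: "ix \<Rightarrow> ix \<Rightarrow> int" where
  "cartan i j = ([[ 2, 0,-1, 0, 0, 0],
                  [ 0, 2, 0,-1, 0, 0],
                  [-1, 0, 2,-1, 0, 0],
                  [ 0,-1,-1, 2,-1, 0],
                  [ 0, 0, 0,-1, 2,-1],
                  [ 0, 0, 0, 0,-1, 2]] ! ixn i) ! ixn j"

definition sroot :: "ix \<Rightarrow> wt" where
  "sroot i = (\<lambda>j. cartan i j)"

text \<open>Gram matrix \<open>\<langle>\<lambda>_i,\<lambda>_j\<rangle>\<close> = inverse Cartan matrix (checked below).\<close>
definition gram :: "ix \<Rightarrow> ix \<Rightarrow> rat" where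
  "gram i j = of_int (([[4, 3, 5, 6, 4, 2],
                         [3, 6, 6, 9, 6, 3],
                         [5, 6,10,12, 8, 4],
                         [6, 9,12,18,12, 6],
                         [4, 6, 8,12,10, 5],
                         [2, 3, 4, 6, 5, 4]] ! ixn i) ! ixn j) / 3"

lemma gram_inverse_cartan:
  "(\<Sum>k\<in>UNIV. of_int (cartan i k) * gram k j) = (if i = j then 1 else 0)"
  by (cases i; cases j) (simp_all add: UNIV_ix cartan_def gram_def)

definition pair :: "wt \<Rightarrow> wt \<Rightarrow> rat" where
  "pair \<mu> \<nu> = (\<Sum>i\<in>UNIV. \<Sum>j\<in>UNIV. of_int (\<mu> i) * gram i j * of_int (\<nu> j))"

definition in_Q :: "wt \<Rightarrow> bool" where
  "in_Q \<nu> \<longleftrightarrow> (\<exists>c :: ix \<Rightarrow> int. \<nu> = (\<lambda>j. \<Sum>i\<in>UNIV. c i * sroot i j))"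

definition eps_tab :: "ix \<Rightarrow> ix \<Rightarrow> int" where
  "eps_tab i j = ([[ 1, 1, 1, 1, 1, 1],
                   [-1, 1, 1, 1, 1,-1],
                   [-1, 1, 1, 1, 1, 1],
                   [ 1,-1, 1, 1, 1, 1],
                   [ 1, 1, 1, 1, 1,-1],
                   [ 1, 1, 1, 1, 1, 1]] ! ixn i) ! ixn j"

definition eps :: "wt \<Rightarrow> wt \<Rightarrow> complex" where
  "eps \<mu> \<nu> = (\<Prod>i\<in>UNIV. \<Prod>j\<in>UNIV. (of_int (eps_tab i j) :: complex) powi (\<mu> i * \<nu> j))"

fun tau :: "ix \<Rightarrow> ix" where
  "tau I1 = I6" | "tau I6 = I1" | "tau I3 = I5" | "tau I5 = I3" | "tau I2 = I2" | "tau I4 = I4"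

definition Proj :: "wt \<Rightarrow> (ix \<Rightarrow> rat)" where
  "Proj \<nu> = (\<lambda>i. (of_int (\<nu> i) + of_int (\<nu> (tau i))) / 2)"

text \<open>A monomial in \<open>S(\<h>^-)\<close>: the multiset element \<open>(i,n)\<close> (with \<open>n \<ge> 1\<close>) stands for
  the factor \<open>\<lambda>_i(-n)\<close>. A vector is a finitely supported coefficient function on
  pairs (monomial, lattice point \<open>\<beta>\<close>), the pair standing for \<open>u \<otimes> e^\<beta>\<close>.\<close>
type_synonym mono = "(ix \<times> nat) multiset"
type_synonym vec = "mono \<times> wt \<Rightarrow> complex"

definition supp :: "vec \<Rightarrow> (mono \<times> wt) set" where
  "supp v = {p. v p \<noteq> 0}"

definition bas :: "mono \<Rightarrow> wt \<Rightarrow> vec" where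
  "bas m \<beta> = (\<lambda>p. if p = (m, \<beta>) then 1 else 0)"

definition lin :: "(mono \<Rightarrow> wt \<Rightarrow> vec) \<Rightarrow> vec \<Rightarrow> vec" where
  "lin f v = (\<lambda>x. \<Sum>p\<in>supp v. v p * f (fst p) (snd p) x)"

definition fsum :: "('a \<Rightarrow> vec) \<Rightarrow> vec" where
  "fsum F = (\<lambda>x. \<Sum>a\<in>{a. F a \<noteq> (\<lambda>_. 0)}. F a x)"

definition heis :: "wt \<Rightarrow> int \<Rightarrow> vec \<Rightarrow> vec" where
  "heis h n = lin (\<lambda>m \<beta>.
     if n < 0 then (\<lambda>x. \<Sum>j\<in>UNIV. of_int (h j) * bas (m + {#(j, nat (- n))#}) \<beta> x)
     else if n = 0 then (\<lambda>x. of_rat (pair h \<beta>) * bas m \<beta> x)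
     else (\<lambda>x. \<Sum>j\<in>UNIV. of_int n * of_rat (pair h (lam j))
                 * of_nat (count m (j, nat n)) * bas (m - {#(j, nat n)#}) \<beta> x))"

text \<open>Coefficients of \<open>exp(-\<Sum>_k \<alpha>(k) z^{-k}/k) = \<Sum>_b Eplus \<alpha> b z^{-b}\<close> and
  \<open>exp(\<Sum>_k \<alpha>(-k) z^k/k) = \<Sum>_a Eminus \<alpha> a z^a\<close>, via \<open>b f_b = \<Sum>_k k g_k f_{b-k}\<close>.\<close>
fun Eplus :: "wt \<Rightarrow> nat \<Rightarrow> vec \<Rightarrow> vec" where
  "Eplus \<alpha> 0 v = v"
| "Eplus \<alpha> (Suc b) v = (\<lambda>x. (\<Sum>k\<in>{1..Suc b}. - heis \<alpha> (int k) (Eplus \<alpha> (Suc b - k) v) x)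
                             / of_nat (Suc b))"

fun Eminus :: "wt \<Rightarrow> nat \<Rightarrow> vec \<Rightarrow> vec" where
  "Eminus \<alpha> 0 v = v"
| "Eminus \<alpha> (Suc a) v = (\<lambda>x. (\<Sum>k\<in>{1..Suc a}. heis \<alpha> (- int k) (Eminus \<alpha> (Suc a - k) v) x)
                              / of_nat (Suc a))"

text \<open>\<open>{1 \<otimes> e^\<alpha>}_n\<close> for \<open>\<alpha> \<in> Q\<close>: the coefficient of \<open>z^{-n-1}\<close> in
  \<open>E^-(\<alpha>,z) E^+(\<alpha>,z) e_\<alpha> z^{\<alpha>(0)}\<close>. On \<open>u \<otimes> e^\<beta>\<close>, \<open>z^{\<alpha>(0)}\<close> contributes
  \<open>z^{\<langle>\<alpha>,\<beta>\<rangle>}\<close> (an integer power since \<open>\<alpha> \<in> Q\<close>).\<close>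
definition vo :: "wt \<Rightarrow> int \<Rightarrow> vec \<Rightarrow> vec" where
  "vo \<alpha> n = lin (\<lambda>m \<beta>. fsum (\<lambda>b :: nat.
      let k = \<lfloor>pair \<alpha> \<beta>\<rfloor>; a = int b - k - n - 1 in
      if a \<ge> 0 then (\<lambda>x. eps \<alpha> \<beta> * Eminus \<alpha> (nat a) (Eplus \<alpha> b (bas m (\<alpha> + \<beta>))) x)
      else (\<lambda>_. 0)))"

text \<open>Modes of \<open>Y(h(-1)^2 \<otimes> e^0, z) = :h(z)h(z):\<close>:
  \<open>{h(-1)^2 \<otimes> e^0}_m = \<Sum>_{a+b=m-1} :h(a)h(b):\<close>.\<close>
definition sqmode :: "wt \<Rightarrow> int \<Rightarrow> vec \<Rightarrow> vec" where
  "sqmode h m v = fsum (\<lambda>a :: int. let b = m - 1 - a in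
      if a \<le> b then heis h a (heis h b v) else heis h b (heis h a v))"

definition theta :: wt where
  "theta = sroot I1 + 2 * sroot I2 + 2 * sroot I3 + 3 * sroot I4 + 2 * sroot I5 + sroot I6"

definition gam1 :: wt where "gam1 = sroot I1 - sroot I6"
definition gam2 :: wt where "gam2 = sroot I3 - sroot I5"
definition gam3 :: wt where "gam3 = gam1 + gam2"

text \<open>Modes \<open>{\<omega>}_m\<close> of the coset conformal vector and \<open>L(n) = {\<omega>}_{n+1}\<close>.\<close>
definition omega_mode :: "int \<Rightarrow> vec \<Rightarrow> vec" where
  "omega_mode m v = (\<lambda>x.
     (sqmode (- lam I1 + lam I6) m v x + sqmode (lam I3 - lam I5) m v x
       + sqmode (lam I1 - lam I3 + lam I5 - lam I6) m v x) / 10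
     + (- vo gam1 m v x - vo (- gam1) m v x - vo gam2 m v x - vo (- gam2) m v x
        + vo gam3 m v x + vo (- gam3) m v x) / 5)"

definition Lop :: "int \<Rightarrow> vec \<Rightarrow> vec" where
  "Lop n = omega_mode (n + 1)"

text \<open>\<open>V^{\<Lambda>_6}\<close>: finitely supported vectors supported on \<open>S(\<h>^-) \<otimes> e^\<nu>\<close>, \<open>\<nu> \<in> \<lambda>_6 + Q\<close>.\<close>
definition in_VL6 :: "vec \<Rightarrow> bool" where
  "in_VL6 v \<longleftrightarrow> finite (supp v) \<and>
     (\<forall>p\<in>supp v. (\<forall>q\<in>#fst p. snd q \<ge> 1) \<and> in_Q (snd p - lam I6))"

text \<open>Highest weight vector of type \<open>Vir(4/5,h) \<otimes> W^{\<Omega>_j}\<close> with \<open>\<omega>_j = w\<close>: (HW1)-(HW5).\<close>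
definition hw_vector :: "vec \<Rightarrow> complex \<Rightarrow> (ix \<Rightarrow> rat) \<Rightarrow> bool" where
  "hw_vector v h w \<longleftrightarrow>
     v \<noteq> (\<lambda>_. 0) \<and> finite (supp v) \<and>
     vo (- theta) 1 v = (\<lambda>_. 0) \<and>
     vo (sroot I2) 0 v = (\<lambda>_. 0) \<and>
     vo (sroot I4) 0 v = (\<lambda>_. 0) \<and>
     (\<lambda>x. vo (sroot I3) 0 v x + vo (sroot I5) 0 v x) = (\<lambda>_. 0) \<and>
     (\<lambda>x. vo (sroot I1) 0 v x + vo (sroot I6) 0 v x) = (\<lambda>_. 0) \<and>
     Lop 1 v = (\<lambda>_. 0) \<and> Lop 2 v = (\<lambda>_. 0) \<and>
     Lop 0 v = (\<lambda>x. h * v x) \<and>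
     (\<forall>p\<in>supp v. Proj (snd p) = w)"

end

theory Submission
  imports Defs
begin

text \<open>All three components of \<open>\<tau>R\<close> are vacuum vectors \<open>1 \<otimes> e^\<nu>\<close>. On such vectors every
  Heisenberg operator of positive mode vanishes, so \<open>h(0)\<close> acts by \<open>\<langle>h,\<nu>\<rangle>\<close>, the quadratic
  modes reduce to \<open>h(0)^2\<close> or vanish, and \<open>{1 \<otimes> e^\<alpha>}_n e^\<nu>\<close> is zero for
  \<open>\<langle>\<alpha>,\<nu>\<rangle> + n \<ge> 0\<close> and equals \<open>\<epsilon>(\<alpha>,\<nu>) e^{\<alpha>+\<nu>}\<close> for \<open>\<langle>\<alpha>,\<nu>\<rangle> + n = -1\<close>. The weights
  \<open>\<nu>\<close> of \<open>\<tau>R\<close> pair with every simple root to at least \<open>-1\<close>, so the raising operators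
  either kill the components or map two of them to the same vector with opposite signs;
  \<open>L(1), L(2)\<close> vanish by degree, and \<open>L(0)\<close> is a \<open>3 \<times> 3\<close> matrix computation giving \<open>2/3\<close>.\<close>

lemma lin_eq_sum_superset:
  assumes "finite S" "supp v \<subseteq> S"
  shows "lin f v x = (\<Sum>p\<in>S. v p * f (fst p) (snd p) x)"
  unfolding lin_def
  by (rule sum.mono_neutral_left[OF assms]) (auto simp: supp_def)

lemma lin_bas: "lin f (bas m \<beta>) = f m \<beta>"
proof
  fix x
  have "supp (bas m \<beta>) \<subseteq> {(m, \<beta>)}" by (auto simp: supp_def bas_def)
  then show "lin f (bas m \<beta>) x = f m \<beta> x"
    by (simp add: lin_eq_sum_superset[of "{(m, \<beta>)}"] bas_def)
qed

lemma lin_zero: "lin f (\<lambda>_. 0) = (\<lambda>_. 0)"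
  by (simp add: lin_def supp_def)

lemma fsum_eq_single:
  assumes "\<And>a. a \<noteq> z \<Longrightarrow> F a = (\<lambda>_. 0)"
  shows "fsum F = F z"
proof (cases "F z = (\<lambda>_. 0)")
  case True
  then have "{a. F a \<noteq> (\<lambda>_. 0)} = {}" using assms by (metis (mono_tags) empty_Collect_eq)
  then show ?thesis using True by (simp add: fsum_def)
next
  case False
  then have "{a. F a \<noteq> (\<lambda>_. 0)} = {z}" using assms by auto
  then show ?thesis by (simp add: fsum_def)
qed

lemma heis_zero_vector: "heis h n (\<lambda>_. 0) = (\<lambda>_. 0)"
  by (simp add: heis_def lin_zero)

lemma heis_pos_vacuum: "n > 0 \<Longrightarrow> heis h n (bas {#} \<beta>) = (\<lambda>_. 0)"
  by (simp add: heis_def lin_bas)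

lemma heis_zero_mode_bas: "heis h 0 (bas m \<beta>) = (\<lambda>x. of_rat (pair h \<beta>) * bas m \<beta> x)"
  by (simp add: heis_def lin_bas)

lemma Eminus_zero_vector: "Eminus \<alpha> a (\<lambda>_. 0) = (\<lambda>_. 0)"
  by (induction a rule: less_induct) (case_tac x; simp add: heis_zero_vector)

lemma Eplus_vacuum: "Eplus \<alpha> b (bas {#} \<beta>) = (if b = 0 then bas {#} \<beta> else (\<lambda>_. 0))"
proof (induction b rule: less_induct)
  case (less b)
  show ?case
  proof (cases b)
    case (Suc c)
    have "heis \<alpha> (int k) (Eplus \<alpha> (Suc c - k) (bas {#} \<beta>)) = (\<lambda>_. 0)" if "k \<in> {1..Suc c}" for k
      using less[of "Suc c - k"] that Suc heis_pos_vacuum[of "int k"] heis_zero_vector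
      by (cases "Suc c - k = 0") auto
    then show ?thesis using Suc by simp
  qed simp
qed

lemma vo_vacuum:
  "vo \<alpha> n (bas {#} \<beta>) =
     (if - \<lfloor>pair \<alpha> \<beta>\<rfloor> - n - 1 \<ge> 0
      then (\<lambda>x. eps \<alpha> \<beta> * Eminus \<alpha> (nat (- \<lfloor>pair \<alpha> \<beta>\<rfloor> - n - 1)) (bas {#} (\<alpha> + \<beta>)) x)
      else (\<lambda>_. 0))"
  unfolding vo_def lin_bas
  by (rule trans[OF fsum_eq_single[where z = "0::nat"]])
     (auto simp: Let_def Eplus_vacuum Eminus_zero_vector)

lemma vo_vacuum_vanishes:
  assumes "pair \<alpha> \<beta> + of_int n \<ge> 0"
  shows "vo \<alpha> n (bas {#} \<beta>) = (\<lambda>_. 0)"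
proof -
  have "- n \<le> \<lfloor>pair \<alpha> \<beta>\<rfloor>" using assms by (simp add: le_floor_iff)
  then show ?thesis by (simp add: vo_vacuum)
qed

lemma vo_vacuum_lowest:
  assumes "pair \<alpha> \<beta> + of_int n + 1 = 0"
  shows "vo \<alpha> n (bas {#} \<beta>) = (\<lambda>x. eps \<alpha> \<beta> * bas {#} (\<alpha> + \<beta>) x)"
proof -
  have "pair \<alpha> \<beta> = of_int (- n - 1)" using assms by simp
  then have "\<lfloor>pair \<alpha> \<beta>\<rfloor> = - n - 1" by simp
  then show ?thesis by (simp add: vo_vacuum)
qed

definition vacuum_comb :: "(wt \<Rightarrow> complex) \<Rightarrow> wt set \<Rightarrow> vec" where
  "vacuum_comb c B = (\<lambda>x. \<Sum>\<beta>\<in>B. c \<beta> * bas {#} \<beta> x)"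

lemma vacuum_comb_apply:
  "finite B \<Longrightarrow> vacuum_comb c B (m, \<nu>) = (if m = {#} \<and> \<nu> \<in> B then c \<nu> else 0)"
  by (cases "m = {#}") (simp_all add: vacuum_comb_def bas_def if_distrib[of "(*) _"] sum.delta cong: if_cong)

lemma supp_vacuum_comb: "finite B \<Longrightarrow> supp (vacuum_comb c B) \<subseteq> (\<lambda>\<beta>. ({#}, \<beta>)) ` B"
  by (auto simp: supp_def vacuum_comb_apply split: if_splits)

lemma lin_vacuum_comb:
  assumes "finite B"
  shows "lin f (vacuum_comb c B) = (\<lambda>x. \<Sum>\<beta>\<in>B. c \<beta> * lin f (bas {#} \<beta>) x)"
proof
  fix x
  have "lin f (vacuum_comb c B) x = (\<Sum>p\<in>(\<lambda>\<beta>. ({#}, \<beta>)) ` B. vacuum_comb c B p * f (fst p) (snd p) x)"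
    using assms by (simp add: lin_eq_sum_superset supp_vacuum_comb)
  also have "\<dots> = (\<Sum>\<beta>\<in>B. c \<beta> * f {#} \<beta> x)"
    using assms by (simp add: sum.reindex inj_on_def vacuum_comb_apply)
  finally show "lin f (vacuum_comb c B) x = (\<Sum>\<beta>\<in>B. c \<beta> * lin f (bas {#} \<beta>) x)"
    by (simp add: lin_bas)
qed

lemma heis_vacuum_comb:
  "finite B \<Longrightarrow> heis h n (vacuum_comb c B) = (\<lambda>x. \<Sum>\<beta>\<in>B. c \<beta> * heis h n (bas {#} \<beta>) x)"
  unfolding heis_def by (rule lin_vacuum_comb)

lemma vo_vacuum_comb:
  "finite B \<Longrightarrow> vo \<alpha> n (vacuum_comb c B) = (\<lambda>x. \<Sum>\<beta>\<in>B. c \<beta> * vo \<alpha> n (bas {#} \<beta>) x)"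
  unfolding vo_def by (rule lin_vacuum_comb)

lemma heis_pos_vacuum_comb:
  "finite B \<Longrightarrow> n > 0 \<Longrightarrow> heis h n (vacuum_comb c B) = (\<lambda>_. 0)"
  by (simp add: heis_vacuum_comb heis_pos_vacuum)

lemma heis_zero_mode_vacuum_comb:
  "finite B \<Longrightarrow> heis h 0 (vacuum_comb c B) = vacuum_comb (\<lambda>\<beta>. of_rat (pair h \<beta>) * c \<beta>) B"
  by (simp add: heis_vacuum_comb heis_zero_mode_bas)
     (simp add: vacuum_comb_def mult.assoc mult.left_commute)

text \<open>Each term of \<open>sqmode h m\<close> applies first a mode \<open>b \<ge> (m - 1)/2\<close>; on vacuum vectors
  only the term \<open>a = b = 0\<close> of \<open>m = 1\<close> survives.\<close>

lemma sqmode_one_vacuum_comb: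
  assumes "finite B"
  shows "sqmode h 1 (vacuum_comb c B) = vacuum_comb (\<lambda>\<beta>. of_rat (pair h \<beta>) ^ 2 * c \<beta>) B"
proof -
  have "sqmode h 1 (vacuum_comb c B) = heis h 0 (heis h 0 (vacuum_comb c B))"
    unfolding sqmode_def
    by (rule trans[OF fsum_eq_single[where z = "0::int"]])
       (auto simp: Let_def assms heis_pos_vacuum_comb heis_zero_vector)
  then show ?thesis
    by (simp add: assms heis_zero_mode_vacuum_comb power2_eq_square mult.assoc)
qed

lemma sqmode_vacuum_comb_vanishes:
  "finite B \<Longrightarrow> m \<ge> 2 \<Longrightarrow> sqmode h m (vacuum_comb c B) = (\<lambda>_. 0)"
  unfolding sqmode_def
  by (rule trans[OF fsum_eq_single[where z = "0::int"]])
     (auto simp: Let_def heis_pos_vacuum_comb heis_zero_vector)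

definition nu1 :: wt where "nu1 = lam I1 - lam I6"
definition nu2 :: wt where "nu2 = - lam I3 + lam I5"
definition nu3 :: wt where "nu3 = - lam I1 + lam I3 - lam I5 + lam I6"

definition tauR_coeff :: "wt \<Rightarrow> complex" where
  "tauR_coeff \<beta> = (if \<beta> = nu3 then -1 else 1)"

lemmas weight_defs = nu1_def nu2_def nu3_def lam_def sroot_def cartan_def
  theta_def gam1_def gam2_def gam3_def

lemma nu_distinct: "nu1 \<noteq> nu2" "nu1 \<noteq> nu3" "nu2 \<noteq> nu3"
  by (auto simp: weight_defs fun_eq_iff dest: spec[of _ I1] spec[of _ I3])

lemma sum_nus: "(\<Sum>\<beta>\<in>{nu1, nu2, nu3}. f \<beta>) = f nu1 + f nu2 + f nu3"
  using nu_distinct by (simp add: add.assoc)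

lemma vacuum_comb_tauR_coeff:
  "vacuum_comb tauR_coeff {nu1, nu2, nu3} = (\<lambda>x. bas {#} nu1 x + bas {#} nu2 x - bas {#} nu3 x)"
  using nu_distinct by (simp add: vacuum_comb_def sum_nus tauR_coeff_def)

lemma nus_in_Lambda6_coset: "in_Q (nu1 - lam I6)" "in_Q (nu2 - lam I6)" "in_Q (nu3 - lam I6)"
proof -
  show "in_Q (nu1 - lam I6)" unfolding in_Q_def
    by (rule exI[of _ "\<lambda>i. case i of I1 \<Rightarrow> 0 | I2 \<Rightarrow> -1 | I3 \<Rightarrow> -1 | I4 \<Rightarrow> -2 | I5 \<Rightarrow> -2 | I6 \<Rightarrow> -2"],
        rule ext, rename_tac j, case_tac j; simp add: weight_defs UNIV_ix)
  show "in_Q (nu2 - lam I6)" unfolding in_Q_def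
    by (rule exI[of _ "\<lambda>i. case i of I1 \<Rightarrow> -1 | I2 \<Rightarrow> -1 | I3 \<Rightarrow> -2 | I4 \<Rightarrow> -2 | I5 \<Rightarrow> -1 | I6 \<Rightarrow> -1"],
        rule ext, rename_tac j, case_tac j; simp add: weight_defs UNIV_ix)
  show "in_Q (nu3 - lam I6)" unfolding in_Q_def
    by (rule exI[of _ "\<lambda>i. case i of I1 \<Rightarrow> -1 | I2 \<Rightarrow> -1 | I3 \<Rightarrow> -1 | I4 \<Rightarrow> -2 | I5 \<Rightarrow> -2 | I6 \<Rightarrow> -1"],
        rule ext, rename_tac j, case_tac j; simp add: weight_defs UNIV_ix)
qed

lemma Proj_nus: "Proj nu1 = (\<lambda>_. 0)" "Proj nu2 = (\<lambda>_. 0)" "Proj nu3 = (\<lambda>_. 0)"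
  by (rule ext, rename_tac j, case_tac j; simp add: Proj_def weight_defs)+

lemma pair_nus:
  "pair (- theta) nu1 = 0" "pair (- theta) nu2 = 0" "pair (- theta) nu3 = 0"
  "pair (sroot I1) nu1 = 1" "pair (sroot I1) nu2 = 0" "pair (sroot I1) nu3 = -1"
  "pair (sroot I2) nu1 = 0" "pair (sroot I2) nu2 = 0" "pair (sroot I2) nu3 = 0"
  "pair (sroot I3) nu1 = 0" "pair (sroot I3) nu2 = -1" "pair (sroot I3) nu3 = 1"
  "pair (sroot I4) nu1 = 0" "pair (sroot I4) nu2 = 0" "pair (sroot I4) nu3 = 0"
  "pair (sroot I5) nu1 = 0" "pair (sroot I5) nu2 = 1" "pair (sroot I5) nu3 = -1"
  "pair (sroot I6) nu1 = -1" "pair (sroot I6) nu2 = 0" "pair (sroot I6) nu3 = 1"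
  "pair gam1 nu1 = 2" "pair gam1 nu2 = 0" "pair gam1 nu3 = -2"
  "pair (- gam1) nu1 = -2" "pair (- gam1) nu2 = 0" "pair (- gam1) nu3 = 2"
  "pair gam2 nu1 = 0" "pair gam2 nu2 = -2" "pair gam2 nu3 = 2"
  "pair (- gam2) nu1 = 0" "pair (- gam2) nu2 = 2" "pair (- gam2) nu3 = -2"
  "pair gam3 nu1 = 2" "pair gam3 nu2 = -2" "pair gam3 nu3 = 0"
  "pair (- gam3) nu1 = -2" "pair (- gam3) nu2 = 2" "pair (- gam3) nu3 = 0"
  "pair (- lam I1 + lam I6) nu1 = -4/3" "pair (- lam I1 + lam I6) nu2 = 2/3"
  "pair (- lam I1 + lam I6) nu3 = 2/3"
  "pair (lam I3 - lam I5) nu1 = 2/3" "pair (lam I3 - lam I5) nu2 = -4/3"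
  "pair (lam I3 - lam I5) nu3 = 2/3"
  "pair (lam I1 - lam I3 + lam I5 - lam I6) nu1 = 2/3"
  "pair (lam I1 - lam I3 + lam I5 - lam I6) nu2 = 2/3"
  "pair (lam I1 - lam I3 + lam I5 - lam I6) nu3 = -4/3"
  by (simp_all add: pair_def UNIV_ix gram_def weight_defs)

lemma eps_nus:
  "eps (sroot I6) nu1 = -1" "eps (sroot I1) nu3 = -1" "eps (sroot I3) nu2 = 1"
  "eps (sroot I5) nu3 = 1" "eps (- gam1) nu1 = 1" "eps gam1 nu3 = 1" "eps gam2 nu2 = 1"
  "eps (- gam2) nu3 = 1" "eps gam3 nu2 = 1" "eps (- gam3) nu1 = 1"
  by (simp_all add: eps_def UNIV_ix eps_tab_def weight_defs)

lemma shifted_nus: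
  "sroot I6 + nu1 = sroot I1 + nu3" "sroot I3 + nu2 = sroot I5 + nu3"
  "- gam1 + nu1 = nu3" "gam1 + nu3 = nu1" "gam2 + nu2 = nu3" "- gam2 + nu3 = nu2"
  "gam3 + nu2 = nu1" "- gam3 + nu1 = nu2" "nu1 - gam1 = nu3" "nu3 - gam2 = nu2" "nu1 - gam3 = nu2"
  by (rule ext, case_tac x; simp add: weight_defs)+

lemmas vo_tauR_simps = vo_vacuum_comb sum_nus tauR_coeff_def nu_distinct pair_nus eps_nus
  shifted_nus vo_vacuum_vanishes vo_vacuum_lowest

lemma tauR_in_VL6: "in_VL6 (vacuum_comb tauR_coeff {nu1, nu2, nu3})"
  using supp_vacuum_comb[of "{nu1, nu2, nu3}" tauR_coeff] nus_in_Lambda6_coset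
  by (auto simp: in_VL6_def intro: finite_subset)

lemma tauR_raising_vanish:
  "vo (- theta) 1 (vacuum_comb tauR_coeff {nu1, nu2, nu3}) = (\<lambda>_. 0)"
  "vo (sroot I2) 0 (vacuum_comb tauR_coeff {nu1, nu2, nu3}) = (\<lambda>_. 0)"
  "vo (sroot I4) 0 (vacuum_comb tauR_coeff {nu1, nu2, nu3}) = (\<lambda>_. 0)"
  "(\<lambda>x. vo (sroot I3) 0 (vacuum_comb tauR_coeff {nu1, nu2, nu3}) x
        + vo (sroot I5) 0 (vacuum_comb tauR_coeff {nu1, nu2, nu3}) x) = (\<lambda>_. 0)"
  "(\<lambda>x. vo (sroot I1) 0 (vacuum_comb tauR_coeff {nu1, nu2, nu3}) x
        + vo (sroot I6) 0 (vacuum_comb tauR_coeff {nu1, nu2, nu3}) x) = (\<lambda>_. 0)"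
  by (simp_all add: vo_tauR_simps)

lemma tauR_L1_L2_vanish:
  "Lop 1 (vacuum_comb tauR_coeff {nu1, nu2, nu3}) = (\<lambda>_. 0)"
  "Lop 2 (vacuum_comb tauR_coeff {nu1, nu2, nu3}) = (\<lambda>_. 0)"
  by (simp_all add: Lop_def omega_mode_def sqmode_vacuum_comb_vanishes vo_tauR_simps)

lemma tauR_L0:
  "Lop 0 (vacuum_comb tauR_coeff {nu1, nu2, nu3}) =
     (\<lambda>x. 2/3 * vacuum_comb tauR_coeff {nu1, nu2, nu3} x)"
proof -
  let ?v = "vacuum_comb tauR_coeff {nu1, nu2, nu3}"
  have sqmode_tauR: "sqmode h 1 ?v = (\<lambda>x. of_rat (pair h nu1) ^ 2 * bas {#} nu1 x
      + of_rat (pair h nu2) ^ 2 * bas {#} nu2 x - of_rat (pair h nu3) ^ 2 * bas {#} nu3 x)" for h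
    using sqmode_one_vacuum_comb[of "{nu1, nu2, nu3}" h tauR_coeff]
    by (simp add: vacuum_comb_tauR_coeff vacuum_comb_def sum_nus tauR_coeff_def nu_distinct)
  show ?thesis
    unfolding Lop_def omega_mode_def add_0 sqmode_tauR pair_nus
    by (simp add: vo_tauR_simps)
       (simp add: vacuum_comb_tauR_coeff fun_eq_iff field_simps of_rat_divide of_rat_minus)
qed

theorem lemma6p18:
  shows "let tauR = (\<lambda>x. bas {#} (lam I1 - lam I6) x + bas {#} (- lam I3 + lam I5) x
                        - bas {#} (- lam I1 + lam I3 - lam I5 + lam I6) x)
         in in_VL6 tauR \<and> hw_vector tauR (2/3) (\<lambda>_. 0)"
proof -
  let ?v = "vacuum_comb tauR_coeff {nu1, nu2, nu3}"
  have tauR_eq: "(\<lambda>x. bas {#} (lam I1 - lam I6) x + bas {#} (- lam I3 + lam I5) x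
      - bas {#} (- lam I1 + lam I3 - lam I5 + lam I6) x) = ?v"
    using vacuum_comb_tauR_coeff[symmetric] by (simp only: nu1_def nu2_def nu3_def)
  have "?v ({#}, nu1) = 1"
    by (simp add: vacuum_comb_apply tauR_coeff_def nu_distinct)
  then have nonzero: "?v \<noteq> (\<lambda>_. 0)" by auto
  have Proj_supp: "\<forall>p\<in>supp ?v. Proj (snd p) = (\<lambda>_. 0)"
    using supp_vacuum_comb[of "{nu1, nu2, nu3}" tauR_coeff] Proj_nus by auto
  have "finite (supp ?v)"
    using tauR_in_VL6 by (simp add: in_VL6_def)
  then show ?thesis
    unfolding Let_def tauR_eq hw_vector_def
    using tauR_in_VL6 nonzero tauR_raising_vanish tauR_L1_L2_vanish tauR_L0 Proj_supp by blast
qed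

end
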